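(* Let $(X,d)$ be a metric space, $V$ a Banach space, $\varphi$ an evolution semiflow on $X$ and $\Phi$ an evolution cocycle over $\varphi$, and let $C=(\varphi,\Phi)$ be the associated skew-evolution semiflow. Suppose $C$ is uniformly exponentially dichotomic, i.e. there exist two projectors $P_1,P_2$ compatible with $C$, constants $N_1,N_2\ge 1$ and $\nu_1,\nu_2>0$ such that $$e^{\nu_1(t-s)}\|\Phi_1(t,t_0,x)v\|\le N_1\|\Phi_1(s,t_0,x)v\|,\qquad e^{\nu_2(t-s)}\|\Phi_2(s,t_0,x)v\|\le N_2\|\Phi_2(t,t_0,x)v\|$$ for all $t\ge s\ge t_0\ge 0$ and all $(x,v)\in X\times V$. Then $C$ is uniformly polynomially dichotomic, i.e. there exist two projectors $P_1,P_2$ compatible with $C$ and constants $N\ge 1$, $\alpha_1>0$, $\alpha_2>0$ such that $$\|\Phi_1(t,s,x)v\|\le N t^{-\alpha_1}s^{\alpha_1}\|P_1(x)v\|,\qquad \|P_2(x)v\|\le N t^{-\alpha_2}s^{\alpha_2}\|\Phi_2(t,s,x)v\|$$ for all $t\ge s\ge 1$ and all $(x,v)\in X\times V$.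
   Context: Notation: $T=\{(t,t_0)\in\mathbb{R}^2: t\ge t_0\ge 0\}$, $Y=X\times V$, $\mathcal{B}(V)$ the bounded linear operators on $V$, $I$ the identity. An evolution semiflow is a map $\varphi:T\times X\to X$ with $\varphi(t,t,x)=x$ and $\varphi(t,s,\varphi(s,t_0,x))=\varphi(t,t_0,x)$ for all $t\ge s\ge t_0\ge0$, $x\in X$. An evolution cocycle over $\varphi$ is a map $\Phi:T\times X\to\mathcal{B}(V)$ with $\Phi(t,t,x)=I$ and $\Phi(t,s,\varphi(s,t_0,x))\Phi(s,t_0,x)=\Phi(t,t_0,x)$ for all $t\ge s\ge t_0\ge 0$, $x\in X$. The skew-evolution semiflow is $C(t,s,x,v)=(\varphi(t,s,x),\Phi(t,s,x)v)$. A projector on $Y$ is a continuous map $P:Y\to Y$, $P(x,v)=(x,P(x)v)$, where each $P(x)$ is a bounded linear projection on $V$; its complementary projector is $Q(x,v)=(x,v-P(x)v)$. $P$ is invariant relative to $C$ if $P(\varphi(t,s,x))\Phi(t,s,x)=\Phi(t,s,x)P(x)$ for all $(t,s)\in T$, $x\in X$. A projector $P_1$ and its complementary projector $P_2$ are compatible with $C$ if both are invariant relative to $C$ and for every $x$, $P_1(x)$ and $P_2(x)$ commute with $P_1(x)P_2(x)=0$. Write $\Phi_k(t,t_0,x)=\Phi(t,t_0,x)P_k(x)$, $k=1,2$. *)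

theory Defs
  imports "HOL-Analysis.Analysis"
begin

definition evolution_semiflow :: "(real \<Rightarrow> real \<Rightarrow> 'x \<Rightarrow> 'x) \<Rightarrow> bool" where
  "evolution_semiflow \<phi> \<longleftrightarrow>
     (\<forall>t x. t \<ge> 0 \<longrightarrow> \<phi> t t x = x) \<and>
     (\<forall>t s t0 x. t \<ge> s \<and> s \<ge> t0 \<and> t0 \<ge> 0 \<longrightarrow> \<phi> t s (\<phi> s t0 x) = \<phi> t t0 x)"

definition evolution_cocycle ::
  "(real \<Rightarrow> real \<Rightarrow> 'x \<Rightarrow> 'x) \<Rightarrow> (real \<Rightarrow> real \<Rightarrow> 'x \<Rightarrow> ('v::real_normed_vector \<Rightarrow>\<^sub>L 'v)) \<Rightarrow> bool" where
  "evolution_cocycle \<phi> \<Phi> \<longleftrightarrow>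
     (\<forall>t x. t \<ge> 0 \<longrightarrow> \<Phi> t t x = id_blinfun) \<and>
     (\<forall>t s t0 x. t \<ge> s \<and> s \<ge> t0 \<and> t0 \<ge> 0 \<longrightarrow>
        \<Phi> t s (\<phi> s t0 x) o\<^sub>L \<Phi> s t0 x = \<Phi> t t0 x)"

definition skew_evolution ::
  "(real \<Rightarrow> real \<Rightarrow> 'x \<Rightarrow> 'x) \<Rightarrow> (real \<Rightarrow> real \<Rightarrow> 'x \<Rightarrow> ('v::real_normed_vector \<Rightarrow>\<^sub>L 'v))
    \<Rightarrow> real \<Rightarrow> real \<Rightarrow> 'x \<times> 'v \<Rightarrow> 'x \<times> 'v" where
  "skew_evolution \<phi> \<Phi> t s xv = (\<phi> t s (fst xv), \<Phi> t s (fst xv) (snd xv))"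

text \<open>A projector on Y = X x V, given by the family P(x): the map (x,v) |-> (x, P(x) v)
  is continuous on Y and each P(x) is a bounded linear projection.\<close>
definition projector :: "('x::topological_space \<Rightarrow> ('v::real_normed_vector \<Rightarrow>\<^sub>L 'v)) \<Rightarrow> bool" where
  "projector P \<longleftrightarrow>
     continuous_on UNIV (\<lambda>(x, v). (x, blinfun_apply (P x) v)) \<and>
     (\<forall>x. P x o\<^sub>L P x = P x)"

definition complementary_projector ::
  "('x \<Rightarrow> ('v::real_normed_vector \<Rightarrow>\<^sub>L 'v)) \<Rightarrow> 'x \<Rightarrow> ('v \<Rightarrow>\<^sub>L 'v)" where
  "complementary_projector P = (\<lambda>x. id_blinfun - P x)"

definition invariant_projector ::
  "(real \<Rightarrow> real \<Rightarrow> 'x \<Rightarrow> 'x) \<Rightarrow> (real \<Rightarrow> real \<Rightarrow> 'x \<Rightarrow> ('v::real_normed_vector \<Rightarrow>\<^sub>L 'v))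
    \<Rightarrow> ('x \<Rightarrow> ('v \<Rightarrow>\<^sub>L 'v)) \<Rightarrow> bool" where
  "invariant_projector \<phi> \<Phi> P \<longleftrightarrow>
     (\<forall>t s x. t \<ge> s \<and> s \<ge> 0 \<longrightarrow> P (\<phi> t s x) o\<^sub>L \<Phi> t s x = \<Phi> t s x o\<^sub>L P x)"

definition compatible_projectors ::
  "(real \<Rightarrow> real \<Rightarrow> 'x::topological_space \<Rightarrow> 'x) \<Rightarrow> (real \<Rightarrow> real \<Rightarrow> 'x \<Rightarrow> ('v::real_normed_vector \<Rightarrow>\<^sub>L 'v))
    \<Rightarrow> ('x \<Rightarrow> ('v \<Rightarrow>\<^sub>L 'v)) \<Rightarrow> ('x \<Rightarrow> ('v \<Rightarrow>\<^sub>L 'v)) \<Rightarrow> bool" where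
  "compatible_projectors \<phi> \<Phi> P1 P2 \<longleftrightarrow>
     projector P1 \<and> projector P2 \<and> P2 = complementary_projector P1 \<and>
     invariant_projector \<phi> \<Phi> P1 \<and> invariant_projector \<phi> \<Phi> P2 \<and>
     (\<forall>x. P1 x o\<^sub>L P2 x = P2 x o\<^sub>L P1 x \<and> P1 x o\<^sub>L P2 x = 0)"

definition uniformly_exponentially_dichotomic ::
  "(real \<Rightarrow> real \<Rightarrow> 'x::topological_space \<Rightarrow> 'x) \<Rightarrow> (real \<Rightarrow> real \<Rightarrow> 'x \<Rightarrow> ('v::real_normed_vector \<Rightarrow>\<^sub>L 'v)) \<Rightarrow> bool" where
  "uniformly_exponentially_dichotomic \<phi> \<Phi> \<longleftrightarrow>
     (\<exists>P1 P2 N1 N2 \<nu>1 \<nu>2. compatible_projectors \<phi> \<Phi> P1 P2 \<and>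
        N1 \<ge> 1 \<and> N2 \<ge> 1 \<and> \<nu>1 > 0 \<and> \<nu>2 > 0 \<and>
        (\<forall>t s t0 x v. t \<ge> s \<and> s \<ge> t0 \<and> t0 \<ge> 0 \<longrightarrow>
           exp (\<nu>1 * (t - s)) * norm ((\<Phi> t t0 x o\<^sub>L P1 x) v) \<le> N1 * norm ((\<Phi> s t0 x o\<^sub>L P1 x) v) \<and>
           exp (\<nu>2 * (t - s)) * norm ((\<Phi> s t0 x o\<^sub>L P2 x) v) \<le> N2 * norm ((\<Phi> t t0 x o\<^sub>L P2 x) v)))"

definition uniformly_polynomially_dichotomic ::
  "(real \<Rightarrow> real \<Rightarrow> 'x::topological_space \<Rightarrow> 'x) \<Rightarrow> (real \<Rightarrow> real \<Rightarrow> 'x \<Rightarrow> ('v::real_normed_vector \<Rightarrow>\<^sub>L 'v)) \<Rightarrow> bool" where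
  "uniformly_polynomially_dichotomic \<phi> \<Phi> \<longleftrightarrow>
     (\<exists>P1 P2 N \<alpha>1 \<alpha>2. compatible_projectors \<phi> \<Phi> P1 P2 \<and>
        N \<ge> 1 \<and> \<alpha>1 > 0 \<and> \<alpha>2 > 0 \<and>
        (\<forall>t s x v. t \<ge> s \<and> s \<ge> 1 \<longrightarrow>
           norm ((\<Phi> t s x o\<^sub>L P1 x) v) \<le> N * t powr (- \<alpha>1) * s powr \<alpha>1 * norm (P1 x v) \<and>
           norm (P2 x v) \<le> N * t powr (- \<alpha>2) * s powr \<alpha>2 * norm ((\<Phi> t s x o\<^sub>L P2 x) v)))"

end

theory Submission
  imports Defs
begin

text \<open>On \<open>[1, \<infinity>)\<close> the logarithm grows no faster than the identity, so an exponential
  decay rate in \<open>t - s\<close> dominates the same polynomial rate in \<open>t / s\<close>. Applied at the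
  initial time \<open>t\<^sub>0 = s\<close>, where \<open>\<Phi>(s, s, x) = I\<close>, the exponential dichotomy estimates
  therefore yield polynomial ones with the same projectors, the exponents \<open>\<nu>\<^sub>1, \<nu>\<^sub>2\<close>
  and the constant \<open>max N\<^sub>1 N\<^sub>2\<close>.\<close>

lemma ln_diff_le_diff:
  fixes s t :: real
  assumes "1 \<le> s" "s \<le> t"
  shows "ln t - ln s \<le> t - s"
proof -
  have "ln t - ln s = ln (t / s)"
    using assms by (simp add: ln_div)
  also have "\<dots> \<le> t / s - 1"
    using assms by (intro ln_le_minus_one) auto
  also have "\<dots> = (t - s) / s"
    using assms by (simp add: field_simps)
  also have "\<dots> \<le> t - s"
    using assms by (simp add: divide_le_eq mult_le_cancel_left1)
  finally show ?thesis .
qed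

lemma exp_neg_le_powr_ratio:
  fixes a s t :: real
  assumes "a \<ge> 0" "1 \<le> s" "s \<le> t"
  shows "exp (- (a * (t - s))) \<le> t powr (- a) * s powr a"
proof -
  have "a * (ln t - ln s) \<le> a * (t - s)"
    using assms ln_diff_le_diff by (intro mult_left_mono) auto
  then have "exp (- (a * (t - s))) \<le> exp (- a * ln t + a * ln s)"
    by (simp add: algebra_simps)
  also have "\<dots> = t powr (- a) * s powr a"
    using assms by (simp add: powr_def mult_exp_exp)
  finally show ?thesis .
qed

lemma exponential_bound_imp_polynomial_bound:
  fixes a s t y z K M :: real
  assumes "exp (a * (t - s)) * y \<le> K * z"
    and "a \<ge> 0" "1 \<le> s" "s \<le> t" "0 \<le> K" "K \<le> M" "0 \<le> z"
  shows "y \<le> M * t powr (- a) * s powr a * z"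
proof -
  have "y = exp (- (a * (t - s))) * (exp (a * (t - s)) * y)"
    by (simp add: exp_minus)
  also have "\<dots> \<le> exp (- (a * (t - s))) * (K * z)"
    using assms(1) by (intro mult_left_mono) auto
  also have "\<dots> \<le> (t powr (- a) * s powr a) * (M * z)"
    using assms exp_neg_le_powr_ratio by (intro mult_mono mult_right_mono) auto
  finally show ?thesis
    by (simp add: ac_simps)
qed

theorem mainTheorem1:
  fixes \<phi> :: "real \<Rightarrow> real \<Rightarrow> 'x::metric_space \<Rightarrow> 'x"
    and \<Phi> :: "real \<Rightarrow> real \<Rightarrow> 'x \<Rightarrow> ('v::banach \<Rightarrow>\<^sub>L 'v)"
  assumes "evolution_semiflow \<phi>"
    and "evolution_cocycle \<phi> \<Phi>"
    and "uniformly_exponentially_dichotomic \<phi> \<Phi>"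
  shows "uniformly_polynomially_dichotomic \<phi> \<Phi>"
proof -
  obtain P1 P2 N1 N2 \<nu>1 \<nu>2 where compatible: "compatible_projectors \<phi> \<Phi> P1 P2"
    and constants: "N1 \<ge> 1" "N2 \<ge> 1" "\<nu>1 > 0" "\<nu>2 > 0"
    and dichotomy: "\<And>t s t0 x v. t \<ge> s \<Longrightarrow> s \<ge> t0 \<Longrightarrow> t0 \<ge> 0 \<Longrightarrow>
           exp (\<nu>1 * (t - s)) * norm ((\<Phi> t t0 x o\<^sub>L P1 x) v) \<le> N1 * norm ((\<Phi> s t0 x o\<^sub>L P1 x) v) \<and>
           exp (\<nu>2 * (t - s)) * norm ((\<Phi> s t0 x o\<^sub>L P2 x) v) \<le> N2 * norm ((\<Phi> t t0 x o\<^sub>L P2 x) v)"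
    using assms(3) unfolding uniformly_exponentially_dichotomic_def by metis
  have cocycle_id: "\<And>s x. s \<ge> 0 \<Longrightarrow> \<Phi> s s x = id_blinfun"
    using assms(2) unfolding evolution_cocycle_def by blast
  define N where "N = max N1 N2"
  have "N \<ge> 1"
    using constants by (simp add: N_def)
  have polynomial:
    "norm ((\<Phi> t s x o\<^sub>L P1 x) v) \<le> N * t powr (- \<nu>1) * s powr \<nu>1 * norm (P1 x v) \<and>
     norm (P2 x v) \<le> N * t powr (- \<nu>2) * s powr \<nu>2 * norm ((\<Phi> t s x o\<^sub>L P2 x) v)"
    if "s \<le> t" "1 \<le> s" for t s x v
    using dichotomy[of s t s x v] cocycle_id[of s x] that constants
    by (auto simp: N_def intro!: exponential_bound_imp_polynomial_bound)
  show ?thesis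
    unfolding uniformly_polynomially_dichotomic_def
    using compatible constants \<open>N \<ge> 1\<close> polynomial by blast
qed

end
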